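(* Let $L$ be an $n\times n$ nonsingular M-matrix with integer entries, and let $\phi_1,\dots,\phi_n:\mathbb{R}\to\mathbb{R}$ be non-negative strictly increasing functions. Define $E_\phi(q)=\sum_{i=1}^n\phi_i((L^{-1}q)_i)$ for $q\in\mathbb{Z}^n$. A vector $f\in\mathbb{Z}^n$ with $f\ge0$ is $z$-superstable with respect to $L$ if and only if $f$ is the minimizer of $\min_{g\sim f,\ g\ge0}E_\phi(g)$ (over $g\in\mathbb{Z}^n$).
   Context: A Z-matrix is a square real matrix whose off-diagonal entries are all $\le 0$. A nonsingular M-matrix is a Z-matrix $L$ that is invertible with $L^{-1}$ having all entries nonnegative. Vector inequalities are entrywise. For $f,g\in\mathbb{Z}^n$, $f\sim g$ means $g-f=Lz$ for some $z\in\mathbb{Z}^n$. A vector $f\in\mathbb{Z}^n$ with $f\ge0$ is $z$-superstable with respect to $L$ if for every $z\in\mathbb{Z}^n$ with $z\ge0$ and $z\ne0$ there exists $i$ with $f_i-(Lz)_i<0$. *)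

theory Defs
  imports "HOL-Analysis.Analysis"
begin

definition of_int_mat :: "int^'n^'m \<Rightarrow> real^'n^'m" where
  "of_int_mat L = (\<chi> i j. real_of_int (L $ i $ j))"

definition of_int_vec :: "int^'n \<Rightarrow> real^'n" where
  "of_int_vec q = (\<chi> i. real_of_int (q $ i))"

definition z_matrix :: "real^'n^'n \<Rightarrow> bool" where
  "z_matrix L \<longleftrightarrow> (\<forall>i j. i \<noteq> j \<longrightarrow> L $ i $ j \<le> 0)"

definition nonsingular_M_matrix :: "real^'n^'n \<Rightarrow> bool" where
  "nonsingular_M_matrix L \<longleftrightarrow>
     z_matrix L \<and> invertible L \<and> (\<forall>i j. matrix_inv L $ i $ j \<ge> 0)"

definition lequiv :: "int^'n^'n \<Rightarrow> int^'n \<Rightarrow> int^'n \<Rightarrow> bool" where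
  "lequiv L f g \<longleftrightarrow> (\<exists>z::int^'n. g - f = L *v z)"

definition nonneg_vec :: "int^'n \<Rightarrow> bool" where
  "nonneg_vec f \<longleftrightarrow> (\<forall>i. f $ i \<ge> 0)"

definition z_superstable :: "int^'n^'n \<Rightarrow> int^'n \<Rightarrow> bool" where
  "z_superstable L f \<longleftrightarrow> nonneg_vec f \<and>
     (\<forall>z::int^'n. nonneg_vec z \<and> z \<noteq> 0 \<longrightarrow> (\<exists>i. f $ i - (L *v z) $ i < 0))"

definition E_phi :: "int^'n^'n \<Rightarrow> ('n \<Rightarrow> real \<Rightarrow> real) \<Rightarrow> int^'n \<Rightarrow> real" where
  "E_phi L \<phi> q = (\<Sum>i\<in>UNIV. \<phi> i ((matrix_inv (of_int_mat L) *v of_int_vec q) $ i))"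

end

theory Submission
  imports Defs
begin

text \<open>
  Write x = L\<inverse>f (over the reals). For an integer vector z we have
  L\<inverse>(f + Lz) = x + z, so E_phi(f + Lz) = sum over i of phi_i(x_i + z_i):
  moving within the class of f by firing z changes the energy monotonically in z.
  The M-matrix hypothesis enters only through invertibility and the sign pattern
  of L. Hence firing a nonnegative
  z \<noteq> 0 strictly increases the energy and "unfiring" it weakly decreases it.
  The combinatorial input is a Z-matrix fact: if f \<ge> 0 and f + Lz \<ge> 0, then
  f - L z^- \<ge> 0, where z^- is the negative part of z. So for superstable f every
  g \<sim> f with g \<ge> 0 has the form f + Lz with z \<ge> 0, and g \<noteq> f has larger energy.
  Conversely, a witness z \<ge> 0, z \<noteq> 0 against superstability yields the
  configuration f - Lz \<sim> f, nonnegative and distinct from f, with no larger energy.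
\<close>

lemma of_int_vec_add: "of_int_vec (a + b) = of_int_vec a + of_int_vec b"
  by (simp add: of_int_vec_def vec_eq_iff)

lemma of_int_vec_mult: "of_int_vec (L *v z) = of_int_mat L *v of_int_vec z"
  by (simp add: of_int_vec_def of_int_mat_def vec_eq_iff matrix_vector_mult_def)

lemma of_int_vec_eq_0_iff: "of_int_vec z = 0 \<longleftrightarrow> z = 0"
  by (simp add: of_int_vec_def vec_eq_iff)

lemma matrix_inv_left: "invertible (A::real^'n^'n) \<Longrightarrow> matrix_inv A ** A = mat 1"
  unfolding invertible_def matrix_inv_def by (rule someI2_ex) auto

lemma matrix_inv_fire:
  fixes L :: "int^'n^'n"
  assumes "invertible (of_int_mat L)"
  shows "matrix_inv (of_int_mat L) *v of_int_vec (f + L *v z)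
       = matrix_inv (of_int_mat L) *v of_int_vec f + of_int_vec z"
proof -
  have "matrix_inv (of_int_mat L) *v (of_int_mat L *v of_int_vec z) = of_int_vec z"
    by (simp add: matrix_vector_mul_assoc matrix_inv_left[OF assms])
  then show ?thesis
    by (simp add: of_int_vec_add of_int_vec_mult matrix_vector_right_distrib)
qed

lemma int_mat_kernel_trivial:
  fixes L :: "int^'n^'n"
  assumes "invertible (of_int_mat L)" and "L *v z = 0"
  shows "z = 0"
  using matrix_inv_fire[OF assms(1), of 0 z] assms(2) by (simp add: of_int_vec_eq_0_iff)

lemma E_phi_fire:
  fixes L :: "int^'n^'n"
  assumes "invertible (of_int_mat L)"
  shows "E_phi L \<phi> (f + L *v z) =
     (\<Sum>i\<in>UNIV. \<phi> i ((matrix_inv (of_int_mat L) *v of_int_vec f) $ i + real_of_int (z $ i)))"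
  unfolding E_phi_def matrix_inv_fire[OF assms] by (simp add: of_int_vec_def)

lemma E_phi_fire_strict_increase:
  fixes L :: "int^'n^'n"
  assumes inv: "invertible (of_int_mat L)" and mono: "\<And>i. strict_mono (\<phi> i)"
    and z: "nonneg_vec z" "z \<noteq> 0"
  shows "E_phi L \<phi> f < E_phi L \<phi> (f + L *v z)"
proof -
  define x where "x = matrix_inv (of_int_mat L) *v of_int_vec f"
  obtain k where "z $ k \<noteq> 0" using z(2) by (auto simp: vec_eq_iff)
  with z(1) have k: "z $ k > 0" by (simp add: nonneg_vec_def order_less_le)
  have "(\<Sum>i\<in>UNIV. \<phi> i (x $ i + 0)) < (\<Sum>i\<in>UNIV. \<phi> i (x $ i + real_of_int (z $ i)))"
  proof (rule sum_strict_mono_ex1)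
    show "\<forall>i\<in>UNIV. \<phi> i (x $ i + 0) \<le> \<phi> i (x $ i + real_of_int (z $ i))"
      using z(1) mono by (simp add: nonneg_vec_def strict_mono_less_eq)
    show "\<exists>i\<in>UNIV. \<phi> i (x $ i + 0) < \<phi> i (x $ i + real_of_int (z $ i))"
      using k mono by (auto simp: strict_mono_less intro!: bexI[of _ k])
  qed simp
  then show ?thesis
    using E_phi_fire[OF inv, of \<phi> f 0] E_phi_fire[OF inv, of \<phi> f z] by (simp add: x_def)
qed

lemma E_phi_unfire_le:
  fixes L :: "int^'n^'n"
  assumes inv: "invertible (of_int_mat L)" and mono: "\<And>i. strict_mono (\<phi> i)"
    and z: "nonneg_vec z"
  shows "E_phi L \<phi> (f + L *v (- z)) \<le> E_phi L \<phi> f"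
proof -
  define x where "x = matrix_inv (of_int_mat L) *v of_int_vec f"
  have "(\<Sum>i\<in>UNIV. \<phi> i (x $ i + real_of_int ((- z) $ i))) \<le> (\<Sum>i\<in>UNIV. \<phi> i (x $ i + 0))"
    using z mono by (intro sum_mono) (simp add: nonneg_vec_def strict_mono_less_eq)
  then show ?thesis
    using E_phi_fire[OF inv, of \<phi> f 0] E_phi_fire[OF inv, of \<phi> f "- z"] by (simp add: x_def)
qed

text \<open>If w \<ge> 0 vanishes at i, then (Lw)_i only collects off-diagonal entries, so it is \<le> 0.\<close>
lemma Z_matrix_row_nonpos:
  fixes L :: "int^'n^'n"
  assumes Z: "\<And>i j. i \<noteq> j \<Longrightarrow> L $ i $ j \<le> 0"
    and w: "\<And>j. w $ j \<ge> 0" and "w $ i = 0"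
  shows "(L *v w) $ i \<le> 0"
  unfolding matrix_vector_mult_def
proof (simp, rule sum_nonpos)
  fix j show "L $ i $ j * w $ j \<le> 0"
    using Z[of i j] w[of j] \<open>w $ i = 0\<close> by (cases "j = i") (simp_all add: mult_nonpos_nonneg)
qed

definition pos_part :: "int^'n \<Rightarrow> int^'n" where
  "pos_part z = (\<chi> i. max 0 (z $ i))"

definition neg_part :: "int^'n \<Rightarrow> int^'n" where
  "neg_part z = (\<chi> i. max 0 (- z $ i))"

lemma pos_part_minus_neg_part: "pos_part z - neg_part z = z"
  by (simp add: pos_part_def neg_part_def vec_eq_iff) linarith

text \<open>
  Rows with z_i \<ge> 0 gain from unfiring z^-, and in
  rows with z_i < 0 firing z^+ only lowers the entry of f + Lz.
\<close>
lemma unfire_neg_part_nonneg: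
  fixes L :: "int^'n^'n"
  assumes Z: "\<And>i j. i \<noteq> j \<Longrightarrow> L $ i $ j \<le> 0"
    and f: "nonneg_vec f" and g: "nonneg_vec (f + L *v z)"
  shows "nonneg_vec (f - L *v neg_part z)"
  unfolding nonneg_vec_def
proof
  fix i
  have split: "(L *v z) $ i = (L *v pos_part z) $ i - (L *v neg_part z) $ i"
    by (metis pos_part_minus_neg_part matrix_vector_mult_diff_distrib vector_minus_component)
  show "(f - L *v neg_part z) $ i \<ge> 0"
  proof (cases "z $ i \<ge> 0")
    case True
    then have "(L *v neg_part z) $ i \<le> 0"
      by (intro Z_matrix_row_nonpos[OF Z]) (simp_all add: neg_part_def)
    moreover have "f $ i \<ge> 0" using f by (simp add: nonneg_vec_def)
    ultimately show ?thesis by simp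
  next
    case False
    then have "(L *v pos_part z) $ i \<le> 0"
      by (intro Z_matrix_row_nonpos[OF Z]) (simp_all add: pos_part_def)
    moreover have "f $ i + (L *v z) $ i \<ge> 0" using g by (simp add: nonneg_vec_def)
    ultimately have "f $ i - (L *v neg_part z) $ i \<ge> 0" using split by linarith
    then show ?thesis by simp
  qed
qed

lemma superstable_fire_nonneg:
  fixes L :: "int^'n^'n"
  assumes Z: "\<And>i j. i \<noteq> j \<Longrightarrow> L $ i $ j \<le> 0"
    and ss: "z_superstable L f" and g: "nonneg_vec (f + L *v z)"
  shows "nonneg_vec z"
proof -
  have unfire: "nonneg_vec (f - L *v neg_part z)"
    using unfire_neg_part_nonneg[OF Z _ g] ss by (simp add: z_superstable_def)
  have "neg_part z = 0"
  proof (rule ccontr)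
    assume "neg_part z \<noteq> 0"
    moreover have "nonneg_vec (neg_part z)" by (simp add: nonneg_vec_def neg_part_def)
    ultimately obtain i where "f $ i - (L *v neg_part z) $ i < 0"
      using ss by (auto simp: z_superstable_def)
    moreover have "f $ i - (L *v neg_part z) $ i \<ge> 0"
      using unfire by (simp add: nonneg_vec_def)
    ultimately show False by linarith
  qed
  then show ?thesis
    unfolding nonneg_vec_def neg_part_def vec_eq_iff
    by (simp add: max_def split: if_splits) (metis linorder_le_cases order_refl)
qed

lemma lequiv_iff_fire: "lequiv L f g \<longleftrightarrow> (\<exists>z. g = f + L *v z)"
  unfolding lequiv_def by (metis add_diff_cancel_left' diff_add_cancel add.commute)

theorem mainTheorem15:
  fixes L :: "int^'n^'n" and \<phi> :: "'n \<Rightarrow> real \<Rightarrow> real" and f :: "int^'n"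
  assumes "nonsingular_M_matrix (of_int_mat L)"
    and "\<And>i x. \<phi> i x \<ge> 0"
    and "\<And>i. strict_mono (\<phi> i)"
    and "nonneg_vec f"
  shows "z_superstable L f \<longleftrightarrow>
         (\<forall>g. lequiv L f g \<and> nonneg_vec g \<and> g \<noteq> f \<longrightarrow> E_phi L \<phi> f < E_phi L \<phi> g)"
proof -
  have inv: "invertible (of_int_mat L)" using assms(1) by (simp add: nonsingular_M_matrix_def)
  have Z: "\<And>i j. i \<noteq> j \<Longrightarrow> L $ i $ j \<le> 0"
    using assms(1) by (simp add: nonsingular_M_matrix_def z_matrix_def of_int_mat_def)
  show ?thesis
  proof (intro iffI allI impI)
    fix g assume ss: "z_superstable L f" and g: "lequiv L f g \<and> nonneg_vec g \<and> g \<noteq> f"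
    then obtain z where gz: "g = f + L *v z" by (auto simp: lequiv_iff_fire)
    have "nonneg_vec z" using superstable_fire_nonneg[OF Z ss] g gz by simp
    moreover have "z \<noteq> 0" using g gz by auto
    ultimately show "E_phi L \<phi> f < E_phi L \<phi> g"
      using E_phi_fire_strict_increase[OF inv assms(3)] gz by simp
  next
    assume min: "\<forall>g. lequiv L f g \<and> nonneg_vec g \<and> g \<noteq> f \<longrightarrow> E_phi L \<phi> f < E_phi L \<phi> g"
    show "z_superstable L f" unfolding z_superstable_def
    proof (intro conjI allI impI assms(4))
      fix z :: "int^'n" assume z: "nonneg_vec z \<and> z \<noteq> 0"
      show "\<exists>i. f $ i - (L *v z) $ i < 0"
      proof (rule ccontr)
        assume "\<not> ?thesis"
        then have "nonneg_vec (f + L *v (- z))"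
          by (simp add: nonneg_vec_def matrix_vector_mult_def sum_negf not_less)
        moreover have "f + L *v (- z) \<noteq> f"
          using int_mat_kernel_trivial[OF inv, of "- z"] z by auto
        ultimately have "E_phi L \<phi> f < E_phi L \<phi> (f + L *v (- z))"
          using min lequiv_iff_fire by blast
        moreover have "E_phi L \<phi> (f + L *v (- z)) \<le> E_phi L \<phi> f"
          using E_phi_unfire_le inv assms(3) z by blast
        ultimately show False by linarith
      qed
    qed
  qed
qed

end
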